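(* Let $\mathscr{H}$ be a Hilbert space, let $\mathscr{X}$ be a Hilbert $\mathbb{K}(\mathscr{H})$-module with an orthonormal basis $(u_\lambda)_{\lambda\in\Lambda}$, and let $(\eta_\lambda)_{\lambda\in\Lambda}$ be an arbitrary family of unit vectors in $\mathscr{H}$. Then there exists an orthonormal basis $(v_\lambda)_{\lambda\in\Lambda}$ of $\mathscr{X}$ such that $\langle v_\lambda,v_\lambda\rangle=\theta_{\eta_\lambda,\eta_\lambda}$ for each $\lambda\in\Lambda$.
   Context: $\mathbb{K}(\mathscr{H})$ is the $C^*$-algebra of compact operators on $\mathscr{H}$; for $\xi,\eta\in\mathscr{H}$, $\theta_{\xi,\eta}$ is the rank-one operator $\zeta\mapsto\xi\langle\eta,\zeta\rangle$. An element $u$ of a Hilbert $\mathfrak{A}$-module is a basic vector if $e=\langle u,u\rangle$ is a minimal projection of $\mathfrak{A}$ ($e\mathfrak{A}e=\mathbb{C}e$); in $\mathbb{K}(\mathscr{H})$ these are exactly $\theta_{\xi,\xi}$ with $\xi$ a unit vector. A family $(u_\lambda)$ is an orthonormal system if each $u_\lambda$ is a basic vector and $\langle u_\lambda,u_\mu\rangle=0$ for $\lambda\ne\mu$; it is an orthonormal basis if moreover it generates a dense submodule, equivalently $x=\sum_\lambda u_\lambda\langle u_\lambda,x\rangle$ for every $x\in\mathscr{X}$. *)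

theory Defs
  imports "HOL-Analysis.Analysis"
begin

class cvector = ab_group_add +
  fixes cscale :: "complex \<Rightarrow> 'a \<Rightarrow> 'a" (infixr \<open>*\<^sub>C\<close> 75)
  assumes cscale_add_right: "c *\<^sub>C (x + y) = c *\<^sub>C x + c *\<^sub>C y"
    and cscale_add_left: "(c + d) *\<^sub>C x = c *\<^sub>C x + d *\<^sub>C x"
    and cscale_cscale: "c *\<^sub>C (d *\<^sub>C x) = (c * d) *\<^sub>C x"
    and cscale_one: "1 *\<^sub>C x = x"

text \<open>Complex inner product space: the inner product is linear in the second
  argument and conjugate-linear in the first (as in the paper, where
  theta_{xi,eta} zeta = xi <eta,zeta>).\<close>
class cinner_space = cvector + real_normed_vector +
  fixes cinner :: "'a \<Rightarrow> 'a \<Rightarrow> complex"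
  assumes cscale_of_real: "complex_of_real r *\<^sub>C x = r *\<^sub>R x"
    and cinner_add_right: "cinner x (y + z) = cinner x y + cinner x z"
    and cinner_cscale_right: "cinner x (c *\<^sub>C y) = c * cinner x y"
    and cinner_commute: "cinner y x = cnj (cinner x y)"
    and cinner_ge_zero: "Im (cinner x x) = 0 \<and> Re (cinner x x) \<ge> 0"
    and cinner_eq_zero_iff: "cinner x x = 0 \<longleftrightarrow> x = 0"
    and norm_eq_sqrt_cinner: "norm x = sqrt (Re (cinner x x))"

class chilbert_space = cinner_space + complete_space

definition clinear_op :: "('h::cvector \<Rightarrow> 'h) \<Rightarrow> bool" where
  "clinear_op T \<longleftrightarrow> (\<forall>x y. T (x + y) = T x + T y) \<and> (\<forall>c x. T (c *\<^sub>C x) = c *\<^sub>C T x)"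

definition compact_op :: "('h::chilbert_space \<Rightarrow> 'h) \<Rightarrow> bool" where
  "compact_op T \<longleftrightarrow> clinear_op T \<and> compact (closure (T ` cball 0 1))"

definition theta :: "'h::cinner_space \<Rightarrow> 'h \<Rightarrow> 'h \<Rightarrow> 'h" where
  "theta \<xi> \<eta> = (\<lambda>\<zeta>. cinner \<eta> \<zeta> *\<^sub>C \<xi>)"

definition is_adjoint :: "('h::cinner_space \<Rightarrow> 'h) \<Rightarrow> ('h \<Rightarrow> 'h) \<Rightarrow> bool" where
  "is_adjoint S T \<longleftrightarrow> (\<forall>\<xi> \<eta>. cinner (T \<xi>) \<eta> = cinner \<xi> (S \<eta>))"

definition positive_op :: "('h::cinner_space \<Rightarrow> 'h) \<Rightarrow> bool" where
  "positive_op T \<longleftrightarrow> (\<forall>\<xi>. Im (cinner \<xi> (T \<xi>)) = 0 \<and> Re (cinner \<xi> (T \<xi>)) \<ge> 0)"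

definition mnorm :: "('x \<Rightarrow> 'x \<Rightarrow> ('h::chilbert_space \<Rightarrow> 'h)) \<Rightarrow> 'x \<Rightarrow> real" where
  "mnorm ip x = sqrt (onorm (ip x x))"

text \<open>A Hilbert K(H)-module: a complex vector space 'x with a right action
  act x a = x a of K(H) and a K(H)-valued inner product ip x y = <x,y>,
  complete for the induced norm.\<close>
definition hilbert_KH_module ::
  "('x::cvector \<Rightarrow> ('h::chilbert_space \<Rightarrow> 'h) \<Rightarrow> 'x) \<Rightarrow> ('x \<Rightarrow> 'x \<Rightarrow> ('h \<Rightarrow> 'h)) \<Rightarrow> bool" where
  "hilbert_KH_module act ip \<longleftrightarrow>
     \<comment> \<open>right K(H)-module structure, compatible with complex scalars\<close>
     (\<forall>x y a. compact_op a \<longrightarrow> act (x + y) a = act x a + act y a) \<and>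
     (\<forall>x a b. compact_op a \<longrightarrow> compact_op b \<longrightarrow> act x (\<lambda>\<xi>. a \<xi> + b \<xi>) = act x a + act x b) \<and>
     (\<forall>x a b. compact_op a \<longrightarrow> compact_op b \<longrightarrow> act (act x a) b = act x (a \<circ> b)) \<and>
     (\<forall>c x a. compact_op a \<longrightarrow> act (c *\<^sub>C x) a = c *\<^sub>C act x a) \<and>
     (\<forall>c x a. compact_op a \<longrightarrow> act x (\<lambda>\<xi>. c *\<^sub>C a \<xi>) = c *\<^sub>C act x a) \<and>
     \<comment> \<open>K(H)-valued inner product\<close>
     (\<forall>x y. compact_op (ip x y)) \<and>
     (\<forall>x y z \<xi>. ip x (y + z) \<xi> = ip x y \<xi> + ip x z \<xi>) \<and>
     (\<forall>x y c \<xi>. ip x (c *\<^sub>C y) \<xi> = c *\<^sub>C ip x y \<xi>) \<and>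
     (\<forall>x y a. compact_op a \<longrightarrow> ip x (act y a) = ip x y \<circ> a) \<and>
     (\<forall>x y. is_adjoint (ip y x) (ip x y)) \<and>
     (\<forall>x. positive_op (ip x x)) \<and>
     (\<forall>x. ip x x = (\<lambda>_. 0) \<longrightarrow> x = 0) \<and>
     \<comment> \<open>completeness with respect to the norm ||<x,x>||^(1/2)\<close>
     (\<forall>s :: nat \<Rightarrow> 'x.
        (\<forall>e>0. \<exists>N. \<forall>m\<ge>N. \<forall>n\<ge>N. mnorm ip (s m - s n) < e) \<longrightarrow>
        (\<exists>l. \<forall>e>0. \<exists>N. \<forall>n\<ge>N. mnorm ip (s n - l) < e))"

definition minimal_projection :: "('h::chilbert_space \<Rightarrow> 'h) \<Rightarrow> bool" where
  "minimal_projection e \<longleftrightarrow> compact_op e \<and> e \<circ> e = e \<and> is_adjoint e e \<and> e \<noteq> (\<lambda>_. 0) \<and>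
     (\<forall>a. compact_op a \<longrightarrow> (\<exists>c. e \<circ> a \<circ> e = (\<lambda>\<xi>. c *\<^sub>C e \<xi>)))"

definition basic_vector :: "('x \<Rightarrow> 'x \<Rightarrow> ('h::chilbert_space \<Rightarrow> 'h)) \<Rightarrow> 'x \<Rightarrow> bool" where
  "basic_vector ip u \<longleftrightarrow> minimal_projection (ip u u)"

definition orthonormal_system ::
  "('x \<Rightarrow> 'x \<Rightarrow> ('h::chilbert_space \<Rightarrow> 'h)) \<Rightarrow> 'i set \<Rightarrow> ('i \<Rightarrow> 'x) \<Rightarrow> bool" where
  "orthonormal_system ip \<Lambda> u \<longleftrightarrow>
     (\<forall>l\<in>\<Lambda>. basic_vector ip (u l)) \<and>
     (\<forall>l\<in>\<Lambda>. \<forall>m\<in>\<Lambda>. l \<noteq> m \<longrightarrow> ip (u l) (u m) = (\<lambda>_. 0))"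

text \<open>Orthonormal basis: orthonormal system with x = sum_lambda u_lambda <u_lambda,x>
  for all x, the sum converging (as a net of finite partial sums) in the module norm.\<close>
definition orthonormal_basis ::
  "('x::cvector \<Rightarrow> ('h::chilbert_space \<Rightarrow> 'h) \<Rightarrow> 'x) \<Rightarrow> ('x \<Rightarrow> 'x \<Rightarrow> ('h \<Rightarrow> 'h)) \<Rightarrow> 'i set \<Rightarrow> ('i \<Rightarrow> 'x) \<Rightarrow> bool" where
  "orthonormal_basis act ip \<Lambda> u \<longleftrightarrow>
     orthonormal_system ip \<Lambda> u \<and>
     (\<forall>x. \<forall>e>0. \<exists>F0. finite F0 \<and> F0 \<subseteq> \<Lambda> \<and>
        (\<forall>F. finite F \<and> F0 \<subseteq> F \<and> F \<subseteq> \<Lambda> \<longrightarrow>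
           mnorm ip (x - (\<Sum>l\<in>F. act (u l) (ip (u l) x))) < e))"

end

theory Submission
  imports Defs
begin

text \<open>By minimality, every basic vector u has <u,u> = theta(xi,xi) for some unit vector xi,
  and then u theta(xi,xi) = u. Put v = u theta(xi,eta). Then <v,w theta(xi',eta')> =
  theta(eta,xi) <u,w> theta(xi',eta'), which is theta(eta,eta) for w = u and 0 when <u,w> = 0;
  and v <v,x> = u theta(xi,eta) theta(eta,xi) <u,x> = u theta(xi,xi) <u,x> = u <u,x>, so
  replacing every u_l by v_l leaves each finite partial sum of the Fourier expansion unchanged.\<close>

lemma cinner_zero_right [simp]: "cinner x (0::'a::cinner_space) = 0"
  using cinner_add_right[of x "0::'a" 0] by simp

lemma cinner_zero_left [simp]: "cinner (0::'a::cinner_space) x = 0"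
  using cinner_commute[of 0 x] by simp

lemma cinner_cscale_left: "cinner (c *\<^sub>C x) (y::'a::cinner_space) = cnj c * cinner x y"
  by (metis cinner_cscale_right cinner_commute complex_cnj_mult)

lemma cinner_minus_right: "cinner x (- y) = - cinner x (y::'a::cinner_space)"
  using cinner_add_right[of x y "-y"] by (simp add: add_eq_0_iff)

lemma cinner_diff_right: "cinner x (y - z) = cinner x y - cinner x (z::'a::cinner_space)"
  by (simp add: cinner_add_right cinner_minus_right diff_conv_add_uminus del: add_uminus_conv_diff)

lemma cinner_diff_left: "cinner (y - z) x = cinner y x - cinner (z::'a::cinner_space) x"
  by (metis cinner_commute cinner_diff_right complex_cnj_diff)

lemma cscale_zero_left [simp]: "0 *\<^sub>C (x::'a::cvector) = 0"
  using cscale_add_left[of 0 0 x] by simp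

lemma cscale_diff_left: "(c - d) *\<^sub>C (x::'a::cvector) = c *\<^sub>C x - d *\<^sub>C x"
  using cscale_add_left[of "c - d" d x] by (simp add: eq_diff_eq)

lemma cinner_self_eq_norm_square: "cinner x (x::'a::cinner_space) = complex_of_real ((norm x)\<^sup>2)"
proof -
  have "Im (cinner x x) = 0" "Re (cinner x x) \<ge> 0" using cinner_ge_zero by auto
  then show ?thesis by (simp add: norm_eq_sqrt_cinner complex_eq_iff)
qed

lemma cinner_self_eq_1: "norm (x::'a::cinner_space) = 1 \<Longrightarrow> cinner x x = 1"
  by (simp add: cinner_self_eq_norm_square)

lemma cinner_ext: "(\<And>p. cinner p x = cinner p y) \<Longrightarrow> x = (y::'a::cinner_space)"
  using cinner_eq_zero_iff[of "x - y"] by (metis cinner_diff_right right_minus_eq)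

lemma norm_cscale: "norm (c *\<^sub>C (x::'a::cinner_space)) = cmod c * norm x"
proof -
  have "cinner (c *\<^sub>C x) (c *\<^sub>C x) = (cnj c * c) * cinner x x"
    by (simp add: cinner_cscale_left cinner_cscale_right)
  moreover have "cnj c * c = complex_of_real ((cmod c)\<^sup>2)"
    by (metis complex_norm_square mult.commute)
  ultimately have "complex_of_real ((norm (c *\<^sub>C x))\<^sup>2) = complex_of_real ((cmod c * norm x)\<^sup>2)"
    by (simp add: cinner_self_eq_norm_square power_mult_distrib)
  then have "(norm (c *\<^sub>C x))\<^sup>2 = (cmod c * norm x)\<^sup>2"
    by (simp only: of_real_eq_iff)
  then show ?thesis by (simp add: power2_eq_iff_nonneg)
qed

lemma cauchy_schwarz: "cmod (cinner x y) \<le> norm x * norm (y::'a::cinner_space)"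
proof (cases "x = 0")
  case True
  then show ?thesis by simp
next
  case False
  define a where "a = (norm x)\<^sup>2"
  define t where "t = cinner x y"
  have a: "a > 0" using False by (simp add: a_def)
  have tt: "t * cnj t = complex_of_real ((cmod t)\<^sup>2)" by (metis complex_norm_square)
  \<comment> \<open>expand <z,z> \<ge> 0 for the component z of y orthogonal to x\<close>
  define z where "z = y - (t / a) *\<^sub>C x"
  have "cinner z z = cinner y y - (t/a) * cinner y x - cnj (t/a) * cinner x y
     + cnj (t/a) * (t/a) * cinner x x"
    by (simp add: z_def cinner_diff_left cinner_diff_right cinner_cscale_left cinner_cscale_right
        algebra_simps)
  also have "\<dots> = cinner y y - complex_of_real ((cmod t)\<^sup>2 / a)"
  proof -
    have xx: "cinner x x = complex_of_real a" by (simp add: cinner_self_eq_norm_square a_def)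
    have yx: "cinner y x = cnj t" by (simp add: t_def cinner_commute[of y x])
    have "complex_of_real a \<noteq> 0" using a by simp
    then show ?thesis
      using tt by (simp add: xx yx t_def[symmetric] power2_eq_square mult.commute)
  qed
  finally have "Re (cinner z z) = (norm y)\<^sup>2 - (cmod t)\<^sup>2 / a"
    by (simp add: cinner_self_eq_norm_square)
  then have "(cmod t)\<^sup>2 / a \<le> (norm y)\<^sup>2"
    using cinner_ge_zero[of z] by linarith
  then have "(cmod t)\<^sup>2 \<le> (norm x * norm y)\<^sup>2"
    using a by (simp add: divide_le_eq mult.commute a_def power_mult_distrib)
  then show ?thesis unfolding t_def by (meson power2_le_imp_le mult_nonneg_nonneg norm_ge_zero)
qed

lemma compact_op_cscale: "compact_op a \<Longrightarrow> a (c *\<^sub>C x) = c *\<^sub>C a x"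
  by (simp add: compact_op_def clinear_op_def)

lemma theta_apply: "theta \<xi> \<eta> z = cinner \<eta> z *\<^sub>C \<xi>"
  by (simp add: theta_def)

lemma theta_comp_theta:
  "cinner \<eta> \<zeta> = 1 \<Longrightarrow> theta \<xi> \<eta> \<circ> theta \<zeta> \<omega> = theta \<xi> (\<omega>::'a::cinner_space)"
  by (simp add: fun_eq_iff theta_apply cinner_cscale_right cscale_cscale)

lemma is_adjoint_theta: "is_adjoint (theta \<eta> \<xi>) (theta \<xi> (\<eta>::'a::cinner_space))"
  unfolding is_adjoint_def theta_apply
  by (auto simp: cinner_cscale_left cinner_cscale_right cinner_commute[of _ \<eta>])

lemma compact_op_theta: "compact_op (theta (\<xi>::'h::chilbert_space) \<eta>)"
proof -
  have lin: "clinear_op (theta \<xi> \<eta>)"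
    by (simp add: clinear_op_def theta_def cinner_add_right cscale_add_left
        cinner_cscale_right cscale_cscale)
  define K where "K = (\<lambda>c. c *\<^sub>C \<xi>) ` cball 0 (norm \<eta>)"
  have "continuous_on (cball 0 (norm \<eta>)) (\<lambda>c. c *\<^sub>C \<xi>)"
    by (rule lipschitz_on_continuous_on[of "norm \<xi>"], rule lipschitz_onI)
       (auto simp: dist_norm norm_cscale simp flip: cscale_diff_left)
  then have "compact K" unfolding K_def by (intro compact_continuous_image) auto
  moreover have "theta \<xi> \<eta> ` cball 0 1 \<subseteq> K"
  proof
    fix y assume "y \<in> theta \<xi> \<eta> ` cball 0 1"
    then obtain z where z: "norm z \<le> 1" "y = cinner \<eta> z *\<^sub>C \<xi>" by (auto simp: theta_def)
    have "cmod (cinner \<eta> z) \<le> norm \<eta> * norm z" by (rule cauchy_schwarz)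
    also have "\<dots> \<le> norm \<eta>" using z(1) by (simp add: mult_left_le)
    finally show "y \<in> K" unfolding K_def using z by auto
  qed
  ultimately have "closure (theta \<xi> \<eta> ` cball 0 1) \<subseteq> K" "compact K"
    by (simp_all add: closure_minimal compact_imp_closed)
  then have "compact (closure (theta \<xi> \<eta> ` cball 0 1))"
    by (metis closed_closure compact_Int_closed inf.absorb_iff2)
  then show ?thesis using lin by (simp add: compact_op_def)
qed

lemma minimal_projection_theta:
  assumes "norm (\<eta>::'h::chilbert_space) = 1"
  shows "minimal_projection (theta \<eta> \<eta>)"
proof -
  have \<eta>\<eta>: "cinner \<eta> \<eta> = 1" using assms by (rule cinner_self_eq_1)
  have "theta \<eta> \<eta> \<eta> = \<eta>" "\<eta> \<noteq> 0" using \<eta>\<eta> assms by (auto simp: theta_apply cscale_one)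
  then have "theta \<eta> \<eta> \<noteq> (\<lambda>_. 0)" by metis
  moreover have "theta \<eta> \<eta> \<circ> a \<circ> theta \<eta> \<eta> = (\<lambda>z. cinner \<eta> (a \<eta>) *\<^sub>C theta \<eta> \<eta> z)"
    if "compact_op a" for a
    by (simp add: fun_eq_iff theta_apply compact_op_cscale[OF that] cinner_cscale_right
        cscale_cscale mult.commute)
  ultimately show ?thesis
    unfolding minimal_projection_def
    using \<eta>\<eta> by (simp add: compact_op_theta is_adjoint_theta theta_comp_theta) blast
qed

lemma minimal_projection_imp_theta:
  assumes "minimal_projection (e::'h::chilbert_space \<Rightarrow> 'h)"
  obtains \<xi> where "norm \<xi> = 1" "e = theta \<xi> \<xi>"
proof -
  have ce: "compact_op e" and ee: "e \<circ> e = e" and sa: "is_adjoint e e" and nz: "e \<noteq> (\<lambda>_. 0)"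
    and minimal: "\<And>a. compact_op a \<Longrightarrow> \<exists>c. e \<circ> a \<circ> e = (\<lambda>z. c *\<^sub>C e z)"
    using assms by (auto simp: minimal_projection_def)
  obtain z where z: "e z \<noteq> 0" using nz by auto
  define \<xi> where "\<xi> = complex_of_real (1 / norm (e z)) *\<^sub>C e z"
  have "e (e z) = e z" using ee by (metis comp_apply)
  then have e\<xi>: "e \<xi> = \<xi>" by (simp add: \<xi>_def compact_op_cscale[OF ce])
  have n\<xi>: "norm \<xi> = 1" using z by (simp add: \<xi>_def norm_cscale norm_divide)
  then have \<xi>\<xi>: "cinner \<xi> \<xi> = 1" by (rule cinner_self_eq_1)
  \<comment> \<open>minimality of e applied to theta(xi,xi) gives theta(xi,xi) = e theta(xi,xi) e = c e; evaluating at xi gives c = 1\<close>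
  obtain c where c: "e \<circ> theta \<xi> \<xi> \<circ> e = (\<lambda>z. c *\<^sub>C e z)"
    using minimal[OF compact_op_theta] by blast
  have th: "theta \<xi> \<xi> y = c *\<^sub>C e y" for y
  proof -
    have "cinner \<xi> (e y) = cinner \<xi> y" using sa e\<xi> by (metis is_adjoint_def)
    then show ?thesis
      using fun_cong[OF c, of y] by (simp add: theta_apply compact_op_cscale[OF ce] e\<xi>)
  qed
  have "\<xi> = c *\<^sub>C \<xi>" using th[of \<xi>] by (simp add: theta_apply \<xi>\<xi> cscale_one e\<xi>)
  then have "c = 1" using \<xi>\<xi> cinner_cscale_right[of \<xi> c \<xi>] by simp
  then have "e = theta \<xi> \<xi>" using th by (auto simp: fun_eq_iff cscale_one)
  with n\<xi> show thesis by (rule that)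
qed

lemma orthonormal_basis_cong:
  assumes "orthonormal_basis act ip \<Lambda> u"
    and "orthonormal_system ip \<Lambda> v"
    and "\<And>l x. l \<in> \<Lambda> \<Longrightarrow> act (v l) (ip (v l) x) = act (u l) (ip (u l) x)"
  shows "orthonormal_basis act ip \<Lambda> v"
proof -
  have "(\<Sum>l\<in>F. act (v l) (ip (v l) x)) = (\<Sum>l\<in>F. act (u l) (ip (u l) x))" if "F \<subseteq> \<Lambda>" for F x
    using that assms(3) by (intro sum.cong) auto
  with assms(1,2) show ?thesis
    unfolding orthonormal_basis_def by (simp add: subset_iff)
qed

context
  fixes act :: "'x::cvector \<Rightarrow> ('h::chilbert_space \<Rightarrow> 'h) \<Rightarrow> 'x"
    and ip :: "'x \<Rightarrow> 'x \<Rightarrow> ('h \<Rightarrow> 'h)"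
  assumes module: "hilbert_KH_module act ip"
begin

lemma act_act: "compact_op a \<Longrightarrow> compact_op b \<Longrightarrow> act (act x a) b = act x (a \<circ> b)"
  using module by (simp add: hilbert_KH_module_def)

lemma ip_act_right: "compact_op a \<Longrightarrow> ip x (act y a) = ip x y \<circ> a"
  using module by (simp add: hilbert_KH_module_def)

lemma compact_op_ip: "compact_op (ip x y)"
  using module by (simp add: hilbert_KH_module_def)

lemma cinner_ip: "cinner (ip x y p) q = cinner p (ip y x q)"
  using module by (simp add: hilbert_KH_module_def is_adjoint_def)

lemma ip_self_eq_zero: "ip x x = (\<lambda>_. 0) \<Longrightarrow> x = 0"
  using module by (simp add: hilbert_KH_module_def)

lemma ip_add_right: "ip x (y + z) q = ip x y q + ip x z q"
  using module by (simp add: hilbert_KH_module_def)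

lemma ip_diff_right: "ip x (y - z) q = ip x y q - ip x z q"
  using ip_add_right[of x "y - z" z q] by (simp add: eq_diff_eq)

lemma ip_diff_left: "ip (y - z) x q = ip y x q - ip z x q"
  by (rule cinner_ext) (simp add: cinner_ip[symmetric] ip_diff_right cinner_diff_left cinner_diff_right)

lemma ip_act_left:
  assumes "compact_op a" "is_adjoint S a"
  shows "ip (act y a) x = S \<circ> ip y x"
proof
  fix q
  show "ip (act y a) x q = (S \<circ> ip y x) q"
  proof (rule cinner_ext)
    fix p
    have "cinner p (ip (act y a) x q) = cinner (ip x y (a p)) q"
      using assms(1) by (simp add: cinner_ip[symmetric] ip_act_right)
    also have "\<dots> = cinner p (S (ip y x q))" using assms(2) by (simp add: cinner_ip is_adjoint_def)
    finally show "cinner p (ip (act y a) x q) = cinner p ((S \<circ> ip y x) q)" by simp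
  qed
qed

lemma ip_act_theta:
  "ip (act x (theta \<xi> \<eta>)) (act y (theta \<xi>' \<eta>')) = theta \<eta> \<xi> \<circ> ip x y \<circ> theta \<xi>' \<eta>'"
  by (simp add: ip_act_right compact_op_theta ip_act_left[OF compact_op_theta is_adjoint_theta]
      comp_assoc)

lemma act_self_projection:
  assumes "norm \<xi> = 1" and "ip u u = theta \<xi> \<xi>"
  shows "act u (theta \<xi> \<xi>) = u"
proof -
  define E where "E = theta \<xi> \<xi>"
  have idem: "E (E q) = E q" for q
    using theta_comp_theta[OF cinner_self_eq_1[OF assms(1)], of \<xi> \<xi>]
    by (simp add: E_def fun_eq_iff)
  \<comment> \<open>d = u - uE has <d,d> = (1 - E) <u,u> (1 - E) = (1 - E) E (1 - E) = 0\<close>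
  define d where "d = u - act u E"
  have ip_u_d: "ip u d q = E q - E (E q)" for q
    using ip_act_right[OF compact_op_theta, of u u \<xi> \<xi>] assms(2)
    by (simp add: d_def ip_diff_right E_def)
  have "ip (act u E) d = E \<circ> ip u d"
    unfolding E_def by (rule ip_act_left[OF compact_op_theta is_adjoint_theta])
  moreover have "ip d d q = ip u d q - ip (act u E) d q" for q
    using ip_diff_left[of u "act u E" d q] by (simp only: d_def)
  moreover have "E (E q - E (E q)) = E (E q) - E (E (E q))" for q
    by (simp add: E_def theta_apply cinner_diff_right cscale_diff_left)
  ultimately have "ip d d q = 0" for q
    by (simp add: ip_u_d idem)
  then have "d = 0" by (intro ip_self_eq_zero) auto
  then show ?thesis by (simp add: d_def E_def)
qed

lemma ip_self_act_theta:
  assumes "norm \<xi> = 1" "ip u u = theta \<xi> \<xi>"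
  shows "ip (act u (theta \<xi> \<eta>)) (act u (theta \<xi> \<eta>)) = theta \<eta> \<eta>"
  using assms by (simp add: ip_act_theta theta_comp_theta cinner_self_eq_1)

lemma fourier_term_act_theta:
  assumes "norm \<xi> = 1" "norm \<eta> = 1" "ip u u = theta \<xi> \<xi>"
  shows "act (act u (theta \<xi> \<eta>)) (ip (act u (theta \<xi> \<eta>)) x) = act u (ip u x)"
proof -
  have ip_v: "ip (act u (theta \<xi> \<eta>)) x = theta \<eta> \<xi> \<circ> ip u x"
    by (rule ip_act_left[OF compact_op_theta is_adjoint_theta])
  have "act (act u (theta \<xi> \<eta>)) (ip (act u (theta \<xi> \<eta>)) x)
      = act u (theta \<xi> \<eta> \<circ> theta \<eta> \<xi> \<circ> ip u x)"
    using compact_op_ip[of "act u (theta \<xi> \<eta>)" x]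
    by (simp add: act_act compact_op_theta ip_v comp_assoc)
  also have "\<dots> = act u (theta \<xi> \<xi> \<circ> ip u x)"
    using assms(2) by (simp add: theta_comp_theta cinner_self_eq_1)
  also have "\<dots> = act (act u (theta \<xi> \<xi>)) (ip u x)"
    by (simp add: act_act compact_op_theta compact_op_ip)
  finally show ?thesis using act_self_projection[OF assms(1,3)] by simp
qed

end

theorem mainTheorem8:
  fixes act :: "'x::cvector \<Rightarrow> ('h::chilbert_space \<Rightarrow> 'h) \<Rightarrow> 'x"
    and ip :: "'x \<Rightarrow> 'x \<Rightarrow> ('h \<Rightarrow> 'h)"
    and \<Lambda> :: "'i set"
    and u :: "'i \<Rightarrow> 'x"
    and \<eta> :: "'i \<Rightarrow> 'h"
  assumes "hilbert_KH_module act ip"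
    and "orthonormal_basis act ip \<Lambda> u"
    and "\<forall>l\<in>\<Lambda>. norm (\<eta> l) = 1"
  shows "\<exists>v :: 'i \<Rightarrow> 'x. orthonormal_basis act ip \<Lambda> v \<and>
           (\<forall>l\<in>\<Lambda>. ip (v l) (v l) = theta (\<eta> l) (\<eta> l))"
proof -
  have ons: "orthonormal_system ip \<Lambda> u" using assms(2) by (simp add: orthonormal_basis_def)
  have "\<forall>l\<in>\<Lambda>. \<exists>\<xi>. norm \<xi> = 1 \<and> ip (u l) (u l) = theta \<xi> \<xi>"
    using ons by (auto simp: orthonormal_system_def basic_vector_def
        elim!: minimal_projection_imp_theta)
  then obtain \<xi> where \<xi>: "\<And>l. l \<in> \<Lambda> \<Longrightarrow> norm (\<xi> l) = 1 \<and> ip (u l) (u l) = theta (\<xi> l) (\<xi> l)"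
    by metis
  define v where "v l = act (u l) (theta (\<xi> l) (\<eta> l))" for l
  have vv: "ip (v l) (v l) = theta (\<eta> l) (\<eta> l)" if "l \<in> \<Lambda>" for l
    using \<xi>[OF that] by (simp add: v_def ip_self_act_theta[OF assms(1)])
  have "ip (v l) (v m) = (\<lambda>_. 0)" if "l \<in> \<Lambda>" "m \<in> \<Lambda>" "l \<noteq> m" for l m
    using ons that by (simp add: v_def ip_act_theta[OF assms(1)] orthonormal_system_def
        fun_eq_iff theta_apply)
  with vv assms(3) have "orthonormal_system ip \<Lambda> v"
    by (simp add: orthonormal_system_def basic_vector_def minimal_projection_theta)
  moreover have "act (v l) (ip (v l) x) = act (u l) (ip (u l) x)" if "l \<in> \<Lambda>" for l x
    using \<xi>[OF that] assms(3) that by (simp add: v_def fourier_term_act_theta[OF assms(1)])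
  ultimately have "orthonormal_basis act ip \<Lambda> v"
    by (rule orthonormal_basis_cong[OF assms(2)])
  with vv show ?thesis by blast
qed

end
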